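(* Let $M$ and $M'$ be two stable matchings in an instance $I$ of SPA-S. If some student $s_i$ is assigned in $M$ and in $M'$ to different projects that are offered by the same lecturer $l_k$, and $s_i$ prefers $M$ to $M'$, then there exists a student $s_r\in M'(l_k)\setminus M(l_k)$ such that $l_k$ prefers $s_r$ to $s_i$. In particular $M(l_k)\neq M'(l_k)$.
   Context: An instance $I$ of SPA-S consists of a finite set $\mathcal{S}$ of students, a finite set $\mathcal{P}$ of projects and a finite set $\mathcal{L}$ of lecturers. Each student $s_i$ ranks a subset $A_i\subseteq\mathcal{P}$ (its acceptable projects) in strict order. Each project is offered by exactly one lecturer; lecturer $l_k$ offers a nonempty set $P_k\subseteq\mathcal{P}$, the $P_k$ partitioning $\mathcal{P}$. Each lecturer $l_k$ ranks in strict order the students who find at least one project of $P_k$ acceptable. Projects have capacities $c_j\in\mathbb{Z}^+$, lecturers have capacities $d_k\in\mathbb{Z}^+$ with $\max\{c_j:p_j\in P_k\}\le d_k\le\sum\{c_j:p_j\in P_k\}$. A pair $(s_i,p_j)$, $p_j$ offered by $l_k$, is acceptable if $p_j\in A_i$ and $s_i$ is on $l_k$'s list. A matching $M$ is a set of acceptable pairs with each student in at most one pair, $|M(p_j)|\le c_j$, $|M(l_k)|\le d_k$, where $M(s_i)$, $M(p_j)$, $M(l_k)$ denote the project of $s_i$, the students assigned to $p_j$, and the students assigned to projects of $l_k$. Undersubscribed/full means fewer than/exactly capacity many assigned students. An acceptable pair $(s_i,p_j)\notin M$ ($p_j$ offered by $l_k$) blocks $M$ if ($s_i$ is unassigned or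 prefers $p_j$ to $M(s_i)$) and one of: (P1) $p_j$ and $l_k$ undersubscribed; (P2) $p_j$ undersubscribed, $l_k$ full, $s_i\in M(l_k)$; (P3) $p_j$ undersubscribed, $l_k$ full, $l_k$ prefers $s_i$ to the worst student of $M(l_k)$; (P4) $p_j$ full and $l_k$ prefers $s_i$ to the worst student of $M(p_j)$. $M$ is stable if it has no blocking pair. A student $s$ prefers $M$ to $M'$ if $s$ is assigned in both and prefers $M(s)$ to $M'(s)$. *)

theory Defs
  imports Main
begin

text \<open>An SPA-S instance. Strict preference lists are encoded by rank functions
  (smaller rank = more preferred) that are injective on the list.\<close>

record ('s,'p,'l) spa =
  studs :: "'s set"
  projs :: "'p set"
  lects :: "'l set"
  acc   :: "'s \<Rightarrow> 'p set"
  rankS :: "'s \<Rightarrow> 'p \<Rightarrow> nat"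
  offer :: "'p \<Rightarrow> 'l"
  rankL :: "'l \<Rightarrow> 's \<Rightarrow> nat"
  pcap  :: "'p \<Rightarrow> nat"
  lcap  :: "'l \<Rightarrow> nat"

definition offered :: "('s,'p,'l) spa \<Rightarrow> 'l \<Rightarrow> 'p set" where
  "offered I l = {p \<in> projs I. offer I p = l}"

definition llist :: "('s,'p,'l) spa \<Rightarrow> 'l \<Rightarrow> 's set" where
  "llist I l = {s \<in> studs I. \<exists>p \<in> acc I s. offer I p = l}"

definition valid_spa :: "('s,'p,'l) spa \<Rightarrow> bool" where
  "valid_spa I \<longleftrightarrow>
     finite (studs I) \<and> finite (projs I) \<and> finite (lects I) \<and>
     (\<forall>s \<in> studs I. acc I s \<subseteq> projs I \<and> inj_on (rankS I s) (acc I s)) \<and>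
     (\<forall>p \<in> projs I. offer I p \<in> lects I \<and> pcap I p \<ge> 1) \<and>
     (\<forall>l \<in> lects I. offered I l \<noteq> {} \<and> inj_on (rankL I l) (llist I l) \<and>
        Max (pcap I ` offered I l) \<le> lcap I l \<and>
        lcap I l \<le> (\<Sum>p \<in> offered I l. pcap I p))"

definition prefS :: "('s,'p,'l) spa \<Rightarrow> 's \<Rightarrow> 'p \<Rightarrow> 'p \<Rightarrow> bool" where
  "prefS I s p q \<longleftrightarrow> rankS I s p < rankS I s q"

definition prefL :: "('s,'p,'l) spa \<Rightarrow> 'l \<Rightarrow> 's \<Rightarrow> 's \<Rightarrow> bool" where
  "prefL I l s t \<longleftrightarrow> rankL I l s < rankL I l t"

definition acceptable :: "('s,'p,'l) spa \<Rightarrow> 's \<Rightarrow> 'p \<Rightarrow> bool" where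
  "acceptable I s p \<longleftrightarrow> s \<in> studs I \<and> p \<in> acc I s \<and> s \<in> llist I (offer I p)"

definition Mp :: "('s \<times> 'p) set \<Rightarrow> 'p \<Rightarrow> 's set" where
  "Mp M p = {s. (s, p) \<in> M}"

definition Ml :: "('s,'p,'l) spa \<Rightarrow> ('s \<times> 'p) set \<Rightarrow> 'l \<Rightarrow> 's set" where
  "Ml I M l = {s. \<exists>p. (s, p) \<in> M \<and> offer I p = l}"

definition matching :: "('s,'p,'l) spa \<Rightarrow> ('s \<times> 'p) set \<Rightarrow> bool" where
  "matching I M \<longleftrightarrow>
     (\<forall>(s,p) \<in> M. acceptable I s p) \<and>
     (\<forall>s p q. (s,p) \<in> M \<longrightarrow> (s,q) \<in> M \<longrightarrow> p = q) \<and>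
     (\<forall>p \<in> projs I. card (Mp M p) \<le> pcap I p) \<and>
     (\<forall>l \<in> lects I. card (Ml I M l) \<le> lcap I l)"

definition assigned :: "('s \<times> 'p) set \<Rightarrow> 's \<Rightarrow> bool" where
  "assigned M s \<longleftrightarrow> (\<exists>p. (s,p) \<in> M)"

definition worst :: "('s,'p,'l) spa \<Rightarrow> 'l \<Rightarrow> 's set \<Rightarrow> 's" where
  "worst I l X = (ARG_MAX (rankL I l) t. t \<in> X)"

definition blocking :: "('s,'p,'l) spa \<Rightarrow> ('s \<times> 'p) set \<Rightarrow> 's \<Rightarrow> 'p \<Rightarrow> bool" where
  "blocking I M s p \<longleftrightarrow>
     (let l = offer I p in
      acceptable I s p \<and> (s,p) \<notin> M \<and>
      (\<not> assigned M s \<or> (\<exists>q. (s,q) \<in> M \<and> prefS I s p q)) \<and>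
      ( (card (Mp M p) < pcap I p \<and> card (Ml I M l) < lcap I l)
      \<or> (card (Mp M p) < pcap I p \<and> card (Ml I M l) = lcap I l \<and> s \<in> Ml I M l)
      \<or> (card (Mp M p) < pcap I p \<and> card (Ml I M l) = lcap I l \<and>
           prefL I l s (worst I l (Ml I M l)))
      \<or> (card (Mp M p) = pcap I p \<and> prefL I l s (worst I l (Mp M p)))))"

definition stable :: "('s,'p,'l) spa \<Rightarrow> ('s \<times> 'p) set \<Rightarrow> bool" where
  "stable I M \<longleftrightarrow> matching I M \<and> (\<forall>s p. \<not> blocking I M s p)"

end

theory Submission
  imports Defs
begin

text \<open>Since \<open>s\<close> already belongs to \<open>M'(l)\<close> and prefers \<open>p\<close>, stability of \<open>M'\<close> forces \<open>p\<close> to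
  be full in \<open>M'\<close> with students that \<open>l\<close> all prefers to \<open>s\<close>; as \<open>s\<close> occupies a place of \<open>p\<close>
  in \<open>M\<close>, one of them, \<open>r\<close>, is not at \<open>p\<close> in \<open>M\<close>. If \<open>r \<notin> M(l)\<close> we are done. Otherwise
  stability of \<open>M\<close> forces \<open>r\<close> to hold a project \<open>q\<close> of \<open>l\<close> that \<open>r\<close> prefers to \<open>p\<close>, so \<open>r\<close>
  is in the situation of \<open>s\<close> with \<open>l\<close> ranking \<open>r\<close> strictly better; induct on that rank.\<close>

lemma rankL_le_worst:
  assumes "finite X" "x \<in> X"
  shows "rankL I l x \<le> rankL I l (worst I l X)"
proof -
  have "\<forall>y. y \<in> X \<longrightarrow> rankL I l y < Suc (Max (rankL I l ` X))"
    using assms by (simp add: le_imp_less_Suc)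
  from arg_max_nat_lemma[OF assms(2) this] show ?thesis
    using assms(2) unfolding worst_def by blast
qed

lemma exists_in_diff_if_card_le:
  assumes "finite B" "card B \<le> card A" "x \<in> B" "x \<notin> A"
  shows "\<exists>y. y \<in> A \<and> y \<notin> B"
proof (rule ccontr)
  assume "\<not> ?thesis"
  then have "A \<subseteq> B - {x}" using assms(4) by auto
  then have "card A < card B"
    using assms(1,3) card_mono[of "B - {x}" A] card_Diff1_less[of B x] by auto
  then show False using assms(2) by simp
qed

lemma matching_acceptable: "matching I M \<Longrightarrow> (s, p) \<in> M \<Longrightarrow> acceptable I s p"
  unfolding matching_def by auto

lemma matching_unique: "matching I M \<Longrightarrow> (s, p) \<in> M \<Longrightarrow> (s, q) \<in> M \<Longrightarrow> p = q"
  unfolding matching_def by blast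

lemma matching_card_Mp_le: "matching I M \<Longrightarrow> p \<in> projs I \<Longrightarrow> card (Mp M p) \<le> pcap I p"
  unfolding matching_def by auto

lemma matching_card_Ml_le: "matching I M \<Longrightarrow> l \<in> lects I \<Longrightarrow> card (Ml I M l) \<le> lcap I l"
  unfolding matching_def by auto

lemma finite_Mp: "valid_spa I \<Longrightarrow> matching I M \<Longrightarrow> finite (Mp M p)"
  unfolding valid_spa_def matching_def Mp_def acceptable_def
  by (auto intro: finite_subset[of _ "studs I"])

lemma acceptable_in_projs: "valid_spa I \<Longrightarrow> acceptable I s p \<Longrightarrow> p \<in> projs I"
  unfolding valid_spa_def acceptable_def by auto

lemma acceptable_offer_in_lects: "valid_spa I \<Longrightarrow> acceptable I s p \<Longrightarrow> offer I p \<in> lects I"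
  unfolding valid_spa_def acceptable_def by auto

lemma prefS_if_not_prefS:
  assumes "valid_spa I" "acceptable I s p" "acceptable I s q" "p \<noteq> q" "\<not> prefS I s p q"
  shows "prefS I s q p"
proof -
  have "inj_on (rankS I s) (acc I s)" "p \<in> acc I s" "q \<in> acc I s"
    using assms(1-3) unfolding valid_spa_def acceptable_def by auto
  then show ?thesis
    using assms(4,5) unfolding prefS_def by (metis inj_on_def linorder_neqE_nat)
qed

lemma prefL_if_not_prefL:
  assumes "valid_spa I" "acceptable I s p" "acceptable I t q" "offer I p = l" "offer I q = l"
    and "s \<noteq> t" "\<not> prefL I l s t"
  shows "prefL I l t s"
proof -
  have "inj_on (rankL I l) (llist I l)" "s \<in> llist I l" "t \<in> llist I l"
    using acceptable_offer_in_lects[OF assms(1,2)] assms(1-5)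
    unfolding valid_spa_def acceptable_def by auto
  then show ?thesis
    using assms(6,7) unfolding prefL_def by (metis inj_on_def linorder_neqE_nat)
qed

text \<open>(P1) and (P2) rule out \<open>p\<close> being undersubscribed in \<open>M'\<close>, (P4) a student of \<open>M'(p)\<close>
  worse than \<open>s\<close>.\<close>

lemma stable_project_full_of_better_students:
  assumes "valid_spa I" "stable I M'" "acceptable I s p" "(s, p) \<notin> M'"
    and "(s, p') \<in> M'" "offer I p = l" "offer I p' = l" "prefS I s p p'"
  shows "card (Mp M' p) = pcap I p" and "\<And>r. r \<in> Mp M' p \<Longrightarrow> prefL I l r s"
proof -
  have m': "matching I M'" and nb: "\<not> blocking I M' s p"
    using assms(2) unfolding stable_def by auto
  have s_in_Ml: "s \<in> Ml I M' l"
    using assms(5,7) unfolding Ml_def by auto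
  have le_lcap: "card (Ml I M' l) \<le> lcap I l"
    using matching_card_Ml_le[OF m'] acceptable_offer_in_lects[OF assms(1,3)] assms(6) by simp
  show full: "card (Mp M' p) = pcap I p"
  proof (rule ccontr)
    assume "card (Mp M' p) \<noteq> pcap I p"
    then have "card (Mp M' p) < pcap I p"
      using matching_card_Mp_le[OF m' acceptable_in_projs[OF assms(1,3)]] by simp
    then have "blocking I M' s p"
      using le_lcap assms(3-8) s_in_Ml unfolding blocking_def Let_def by auto
    then show False using nb by contradiction
  qed
  fix r assume r: "r \<in> Mp M' p"
  have "\<not> prefL I l s (worst I l (Mp M' p))"
    using nb full assms(3-8) unfolding blocking_def Let_def by auto
  then have "\<not> prefL I l s r"
    using rankL_le_worst[OF finite_Mp[OF assms(1) m'] r, where I=I and l=l]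
    unfolding prefL_def by simp
  moreover have "acceptable I r p" "r \<noteq> s"
    using r assms(4) matching_acceptable[OF m'] unfolding Mp_def by auto
  ultimately show "prefL I l r s"
    using prefL_if_not_prefL[OF assms(1,3)] assms(6) by metis
qed

text \<open>\<open>(r, p)\<close> would block \<open>M\<close>: by (P1) or (P2) if \<open>p\<close> is undersubscribed (as \<open>r \<in> M(l)\<close>),
  by (P4) if it is full (as \<open>s \<in> M(p)\<close>).\<close>

lemma stable_not_prefS_over_project_of_same_lecturer:
  assumes "valid_spa I" "stable I M" "(s, p) \<in> M" "acceptable I r p" "(r, p) \<notin> M"
    and "(r, q) \<in> M" "offer I q = offer I p" "prefL I (offer I p) r s"
  shows "\<not> prefS I r p q"
proof
  assume pref: "prefS I r p q"
  define l where "l = offer I p"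
  have m: "matching I M" and nb: "\<not> blocking I M r p"
    using assms(2) unfolding stable_def by auto
  have r_in_Ml: "r \<in> Ml I M l"
    using assms(6,7) unfolding Ml_def l_def by auto
  have le_lcap: "card (Ml I M l) \<le> lcap I l"
    using matching_card_Ml_le[OF m] acceptable_offer_in_lects[OF assms(1,4)] l_def by simp
  have le_pcap: "card (Mp M p) \<le> pcap I p"
    using matching_card_Mp_le[OF m acceptable_in_projs[OF assms(1,4)]] .
  have "s \<in> Mp M p" using assms(3) unfolding Mp_def by simp
  then have "rankL I l s \<le> rankL I l (worst I l (Mp M p))"
    by (rule rankL_le_worst[OF finite_Mp[OF assms(1) m]])
  then have "prefL I l r (worst I l (Mp M p))"
    using assms(8) unfolding prefL_def l_def by simp
  then have "blocking I M r p"
    using le_lcap le_pcap r_in_Ml assms(4-6) pref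
    unfolding blocking_def Let_def l_def by (auto simp: le_less)
  then show False using nb by contradiction
qed

lemma stable_exchange_step:
  assumes "valid_spa I" "stable I M" "stable I M'"
    and "(s, p) \<in> M" "(s, p') \<in> M'" "p \<noteq> p'"
    and "offer I p = l" "offer I p' = l" "prefS I s p p'"
  obtains r where "(r, p) \<in> M'" "prefL I l r s"
    "r \<in> Ml I M l \<Longrightarrow> \<exists>q. (r, q) \<in> M \<and> offer I q = l \<and> q \<noteq> p \<and> prefS I r q p"
proof -
  have m: "matching I M" and m': "matching I M'"
    using assms(2,3) unfolding stable_def by auto
  have acc: "acceptable I s p" using matching_acceptable[OF m assms(4)] .
  have s_notin: "(s, p) \<notin> M'" using matching_unique[OF m' _ assms(5)] assms(6) by blast
  note M'_full = stable_project_full_of_better_students[OF assms(1,3) acc s_notin assms(5,7-9)]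
  have "card (Mp M p) \<le> card (Mp M' p)"
    using matching_card_Mp_le[OF m acceptable_in_projs[OF assms(1) acc]] M'_full(1) by simp
  then obtain r where r': "(r, p) \<in> M'" and r: "(r, p) \<notin> M"
    using exists_in_diff_if_card_le[OF finite_Mp[OF assms(1) m, of p], of "Mp M' p" s]
      assms(4) s_notin
    unfolding Mp_def by auto
  have better: "prefL I l r s" using M'_full(2) r' unfolding Mp_def by simp
  have acc_r: "acceptable I r p" using matching_acceptable[OF m' r'] .
  show thesis
  proof (rule that[OF r' better])
    assume "r \<in> Ml I M l"
    then obtain q where q: "(r, q) \<in> M" "offer I q = l" unfolding Ml_def by auto
    have "q \<noteq> p" using q(1) r by auto
    moreover have "\<not> prefS I r p q"
      using stable_not_prefS_over_project_of_same_lecturer[OF assms(1,2,4) acc_r r q(1)]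
        q(2) better assms(7) by simp
    ultimately have "prefS I r q p"
      using prefS_if_not_prefS[OF assms(1) acc_r matching_acceptable[OF m q(1)]] by blast
    then show "\<exists>q. (r, q) \<in> M \<and> offer I q = l \<and> q \<noteq> p \<and> prefS I r q p"
      using q \<open>q \<noteq> p\<close> by blast
  qed
qed

lemma stable_exists_better_student_gained:
  assumes "valid_spa I" "stable I M" "stable I M'"
  shows "(s, p) \<in> M \<Longrightarrow> (s, p') \<in> M' \<Longrightarrow> p \<noteq> p' \<Longrightarrow> offer I p = l \<Longrightarrow> offer I p' = l
    \<Longrightarrow> prefS I s p p' \<Longrightarrow> \<exists>r \<in> Ml I M' l - Ml I M l. prefL I l r s"
proof (induction "rankL I l s" arbitrary: s p p' rule: less_induct)
  case less
  obtain r where r': "(r, p) \<in> M'" and better: "prefL I l r s"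
    and moved: "r \<in> Ml I M l \<Longrightarrow> \<exists>q. (r, q) \<in> M \<and> offer I q = l \<and> q \<noteq> p \<and> prefS I r q p"
    using stable_exchange_step[OF assms less.prems] by blast
  show ?case
  proof (cases "r \<in> Ml I M l")
    case False
    moreover have "r \<in> Ml I M' l" using r' less.prems(4) unfolding Ml_def by auto
    ultimately show ?thesis using better by auto
  next
    case True
    then obtain q where q: "(r, q) \<in> M" "offer I q = l" "q \<noteq> p" "prefS I r q p"
      using moved by blast
    have "rankL I l r < rankL I l s" using better unfolding prefL_def .
    from less.hyps[OF this q(1) r' q(3,2) less.prems(4) q(4)]
    obtain t where "t \<in> Ml I M' l - Ml I M l" "prefL I l t r" by blast
    then show ?thesis using better unfolding prefL_def by (meson less_trans)
  qed
qed

theorem lemma1: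
  fixes I :: "('s,'p,'l) spa" and M M' :: "('s \<times> 'p) set"
  assumes "valid_spa I"
    and "stable I M" and "stable I M'"
    and "(s, p) \<in> M" and "(s, p') \<in> M'" and "p \<noteq> p'"
    and "offer I p = l" and "offer I p' = l"
    and "prefS I s p p'"
  shows "(\<exists>r \<in> Ml I M' l - Ml I M l. prefL I l r s) \<and> Ml I M l \<noteq> Ml I M' l"
  using stable_exists_better_student_gained[OF assms] by auto

end
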